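(* Let $q\ge2$ be even and let $A(n,m)$ denote the number of $m$-RCD roots in $\Sigma_q^n$. If $m\ge\lceil\log_q n\rceil+1$, then $A(n,m)\ge (q-1)q^{n-1}$.
   Context: $\Sigma_q=\{0,\dots,q-1\}$, $\boldsymbol{x}_{[a,b]}=x_a\cdots x_b$. A complement operation is a fixed bijection $a\mapsto\overline{a}$ on $\Sigma_q$ with $\overline{a}\ne a$, $\overline{\overline{a}}=a$; $\boldsymbol{x}^{RC}=\overline{x_n}\cdots\overline{x_1}$ for $\boldsymbol{x}=x_1\cdots x_n$. For an integer $m\ge2$, a string $\boldsymbol{x}\in\Sigma_q^n$ is an $m$-RCD root if $\boldsymbol{x}_{[i+m,i+2m-1]}\ne\boldsymbol{x}_{[i,i+m-1]}^{RC}$ for every $i\in[1,n-2m+1]$. *)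

theory Defs
  imports Complex_Main
begin

definition is_complement :: "nat \<Rightarrow> (nat \<Rightarrow> nat) \<Rightarrow> bool" where
  "is_complement q c \<longleftrightarrow> (\<forall>a<q. c a < q \<and> c a \<noteq> a \<and> c (c a) = a)"

definition rev_comp :: "(nat \<Rightarrow> nat) \<Rightarrow> nat list \<Rightarrow> nat list" where
  "rev_comp c x = rev (map c x)"

text \<open>Substring x_[a,b] with 1-based a,b corresponds to take (b-a+1) (drop (a-1) x).
  Condition for i in [1, n-2m+1] rewritten with 0-based j = i-1: j + 2m <= n.\<close>
definition rcd_root :: "(nat \<Rightarrow> nat) \<Rightarrow> nat \<Rightarrow> nat list \<Rightarrow> bool" where
  "rcd_root c m x \<longleftrightarrow>
     (\<forall>j. j + 2 * m \<le> length x \<longrightarrow>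
        take m (drop (j + m) x) \<noteq> rev_comp c (take m (drop j x)))"

definition A :: "nat \<Rightarrow> (nat \<Rightarrow> nat) \<Rightarrow> nat \<Rightarrow> nat \<Rightarrow> nat" where
  "A q c n m = card {x. length x = n \<and> set x \<subseteq> {..<q} \<and> rcd_root c m x}"

end

theory Submission
  imports Defs
begin

text \<open>A union bound over the positions where the reverse-complement condition can fail.
  Equality of the block at \<open>j + m\<close> with the reverse complement of the block at \<open>j\<close>
  fixes \<open>m\<close> letters, so each of the at most \<open>n\<close> positions excludes at most \<open>q^(n-m)\<close>
  strings; as \<open>n \<le> q^(m-1)\<close>, at most \<open>q^(n-1)\<close> strings are excluded in total.\<close>

lemma card_lists_block_determined_le:
  assumes "finite S" and "j + 2 * m \<le> n"
  shows "card {x. length x = n \<and> set x \<subseteq> S \<and> take m (drop (j + m) x) = f (take m (drop j x))}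
           \<le> card S ^ (n - m)"
proof -
  let ?B = "{x. length x = n \<and> set x \<subseteq> S \<and> take m (drop (j + m) x) = f (take m (drop j x))}"
  let ?delete_block = "\<lambda>x::'a list. take (j + m) x @ drop (j + 2 * m) x"
  have decompose: "x = take (j + m) x @ f (drop j (take (j + m) x)) @ drop (j + 2 * m) x"
    if "x \<in> ?B" for x
  proof -
    have "x = take (j + m) x @ take m (drop (j + m) x) @ drop m (drop (j + m) x)"
      by (simp only: append_take_drop_id)
    also have "drop m (drop (j + m) x) = drop (j + 2 * m) x"
      by (simp add: add.commute add.left_commute mult_2)
    finally show ?thesis
      using that by (simp add: take_drop add.commute)
  qed
  have "inj_on ?delete_block ?B"
  proof (rule inj_onI)
    fix x y assume x: "x \<in> ?B" and y: "y \<in> ?B" and eq: "?delete_block x = ?delete_block y"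
    then have "take (j + m) x = take (j + m) y" and "drop (j + 2 * m) x = drop (j + 2 * m) y"
      using assms(2) by (simp_all add: append_eq_append_conv)
    then show "x = y"
      using decompose[OF x] decompose[OF y] by metis
  qed
  moreover have "?delete_block ` ?B \<subseteq> {xs. set xs \<subseteq> S \<and> length xs = n - m}"
  proof
    fix z assume "z \<in> ?delete_block ` ?B"
    then obtain x where x: "x \<in> ?B" and z: "z = ?delete_block x" by blast
    have "set z \<subseteq> set x" using z by (auto dest: in_set_takeD in_set_dropD)
    then show "z \<in> {xs. set xs \<subseteq> S \<and> length xs = n - m}" using x z assms(2) by auto
  qed
  ultimately have "card ?B \<le> card {xs. set xs \<subseteq> S \<and> length xs = n - m}"
    using assms(1) by (intro card_inj_on_le) (simp_all add: finite_lists_length_eq)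
  then show ?thesis
    using assms(1) by (simp add: card_lists_length_eq)
qed

lemma A_ge_union_bound: "q ^ n - (n + 1 - 2 * m) * q ^ (n - m) \<le> A q c n m"
proof -
  define S where "S = {x::nat list. length x = n \<and> set x \<subseteq> {..<q}}"
  define B where "B j = {x. length x = n \<and> set x \<subseteq> {..<q} \<and>
            take m (drop (j + m) x) = rev_comp c (take m (drop j x))}" for j
  define J where "J = {..<n + 1 - 2 * m}"
  have J_iff: "j \<in> J \<longleftrightarrow> j + 2 * m \<le> n" for j
    unfolding J_def by auto
  have "finite S" and card_S: "card S = q ^ n"
    unfolding S_def using finite_lists_length_eq[of "{..<q}" n] card_lists_length_eq[of "{..<q}" n]
    by (simp_all add: conj_commute)
  have "card (\<Union>j\<in>J. B j) \<le> (\<Sum>j\<in>J. card (B j))"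
    by (rule card_UN_le) (simp add: J_def)
  also have "\<dots> \<le> (\<Sum>j\<in>J. q ^ (n - m))"
    using card_lists_block_determined_le[of "{..<q}"] J_iff by (intro sum_mono) (simp add: B_def)
  finally have card_bad: "card (\<Union>j\<in>J. B j) \<le> (n + 1 - 2 * m) * q ^ (n - m)"
    by (simp add: J_def)
  have "{x. length x = n \<and> set x \<subseteq> {..<q} \<and> rcd_root c m x} = S - (\<Union>j\<in>J. B j)"
    unfolding S_def B_def rcd_root_def using J_iff by auto
  then have "A q c n m = card (S - (\<Union>j\<in>J. B j))"
    by (simp add: A_def)
  also have "\<dots> \<ge> card S - card (\<Union>j\<in>J. B j)"
    by (rule diff_card_le_card_Diff, rule finite_subset[OF _ \<open>finite S\<close>]) (auto simp: S_def B_def)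
  finally show ?thesis
    using card_S card_bad by linarith
qed

lemma le_power_if_ceiling_log_le:
  fixes b n k :: nat
  assumes "b > 1" and "n > 0" and "\<lceil>log (real b) (real n)\<rceil> \<le> int k"
  shows "n \<le> b ^ k"
proof -
  have "log (real b) (real n) \<le> real k"
    using assms(3) by linarith
  then have "real n \<le> real b powr real k"
    using assms(1,2) by (simp add: log_le_iff)
  then show ?thesis
    using assms(1) by (simp add: powr_realpow)
qed

theorem lemma3:
  fixes q n m :: nat and c :: "nat \<Rightarrow> nat"
  assumes "q \<ge> 2" and "even q"
    and "is_complement q c"
    and "n \<ge> 1" and "m \<ge> 2"
    and "int m \<ge> \<lceil>log (real q) (real n)\<rceil> + 1"
  shows "A q c n m \<ge> (q - 1) * q ^ (n - 1)"
proof -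
  have "n \<le> q ^ (m - 1)"
    using assms(1,4,5,6) by (intro le_power_if_ceiling_log_le) auto
  have excluded_le: "(n + 1 - 2 * m) * q ^ (n - m) \<le> q ^ (n - 1)"
  proof (cases "2 * m \<le> n")
    case True
    have "(n + 1 - 2 * m) * q ^ (n - m) \<le> q ^ (m - 1) * q ^ (n - m)"
      using \<open>n \<le> q ^ (m - 1)\<close> assms(5) by (intro mult_le_mono1) linarith
    also have "\<dots> = q ^ (n - 1)"
      using True assms(5) by (simp flip: power_add)
    finally show ?thesis .
  qed simp
  have "(q - 1) * q ^ (n - 1) = q ^ n - q ^ (n - 1)"
    using assms(4) by (simp add: diff_mult_distrib flip: power_Suc)
  then show ?thesis
    using A_ge_union_bound[of q n m c] excluded_le by linarith
qed

end
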